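(* Let $W\in[0,1]^{k\times k}$ and consider the collaborative learning problem with strategy space $\mathbb{R}_+^k$, linear utilities $u_i({\boldsymbol\theta})=\sum_jW_{ij}\theta_j$ and thresholds $\mu_i$. If $W_{ij}<W_{ii}$ for all $i\ne j$, then every stable equilibrium is envy-free.
   Context: ${\boldsymbol\theta}$ is feasible if $u_i({\boldsymbol\theta})\ge\mu_i$ for all $i$. A feasible ${\boldsymbol\theta}$ is a stable equilibrium if for no $i$ is there $0\le\theta_i'<\theta_i$ with $u_i(\theta_i',{\boldsymbol\theta}_{-i})\ge\mu_i$ (${\boldsymbol\theta}$ with $i$-th entry replaced). A feasible ${\boldsymbol\theta}$ is envy-free if there are no $i,j$ with $\theta_j<\theta_i$ and $u_i({\boldsymbol\theta}^{(i,j)})\ge\mu_i$, where ${\boldsymbol\theta}^{(i,j)}$ is ${\boldsymbol\theta}$ with entries $i$ and $j$ swapped. *)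

theory Defs
  imports Complex_Main
begin

definition strategy :: "('k \<Rightarrow> real) \<Rightarrow> bool" where
  "strategy \<theta> \<longleftrightarrow> (\<forall>j. \<theta> j \<ge> 0)"

definition feasible :: "('k \<Rightarrow> ('k \<Rightarrow> real) \<Rightarrow> real) \<Rightarrow> ('k \<Rightarrow> real) \<Rightarrow> ('k \<Rightarrow> real) \<Rightarrow> bool" where
  "feasible u \<mu> \<theta> \<longleftrightarrow> strategy \<theta> \<and> (\<forall>i. u i \<theta> \<ge> \<mu> i)"

definition stable_equilibrium :: "('k \<Rightarrow> ('k \<Rightarrow> real) \<Rightarrow> real) \<Rightarrow> ('k \<Rightarrow> real) \<Rightarrow> ('k \<Rightarrow> real) \<Rightarrow> bool" where
  "stable_equilibrium u \<mu> \<theta> \<longleftrightarrow> feasible u \<mu> \<theta> \<and>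
     \<not> (\<exists>i t. 0 \<le> t \<and> t < \<theta> i \<and> u i (\<theta>(i := t)) \<ge> \<mu> i)"

definition swap_entries :: "('k \<Rightarrow> real) \<Rightarrow> 'k \<Rightarrow> 'k \<Rightarrow> ('k \<Rightarrow> real)" where
  "swap_entries \<theta> i j = \<theta>(i := \<theta> j, j := \<theta> i)"

definition envy_free :: "('k \<Rightarrow> ('k \<Rightarrow> real) \<Rightarrow> real) \<Rightarrow> ('k \<Rightarrow> real) \<Rightarrow> ('k \<Rightarrow> real) \<Rightarrow> bool" where
  "envy_free u \<mu> \<theta> \<longleftrightarrow> feasible u \<mu> \<theta> \<and>
     \<not> (\<exists>i j. \<theta> j < \<theta> i \<and> u i (swap_entries \<theta> i j) \<ge> \<mu> i)"

end

theory Submission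
  imports Defs
begin

text \<open>Swapping the entries of agents i and j with \<open>\<theta> j < \<theta> i\<close> costs agent i exactly
  \<open>(W i i - W i j) * (\<theta> i - \<theta> j)\<close> of utility. Agent i can lose the same amount by
  lowering its own entry alone, to \<open>t = (W i j / W i i) * \<theta> i + (1 - W i j / W i i) * \<theta> j\<close>.
  Since \<open>0 \<le> W i j < W i i\<close>, this t lies in \<open>[\<theta> j, \<theta> i)\<close>, so it is a nonnegative
  strictly smaller contribution; if the swap were acceptable to agent i, so would be this
  deviation, contradicting stability.\<close>

lemma sum_mult_fun_upd:
  fixes w \<theta> :: "'k \<Rightarrow> real"
  assumes "finite A" and "i \<in> A"
  shows "(\<Sum>k\<in>A. w k * (\<theta>(i := t)) k) = (\<Sum>k\<in>A. w k * \<theta> k) + w i * (t - \<theta> i)"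
proof -
  have "(\<Sum>k\<in>A - {i}. w k * (\<theta>(i := t)) k) = (\<Sum>k\<in>A - {i}. w k * \<theta> k)"
    by (rule sum.cong) auto
  then have "(\<Sum>k\<in>A. w k * (\<theta>(i := t)) k) = w i * t + (\<Sum>k\<in>A - {i}. w k * \<theta> k)"
    using assms by (simp add: sum.remove[of A i])
  moreover have "(\<Sum>k\<in>A. w k * \<theta> k) = w i * \<theta> i + (\<Sum>k\<in>A - {i}. w k * \<theta> k)"
    using assms by (simp add: sum.remove[of A i])
  ultimately show ?thesis by (simp add: right_diff_distrib)
qed

lemma sum_mult_swap_entries:
  fixes w \<theta> :: "'k::finite \<Rightarrow> real"
  shows "(\<Sum>k\<in>UNIV. w k * swap_entries \<theta> i j k)
           = (\<Sum>k\<in>UNIV. w k * \<theta> k) - (w i - w j) * (\<theta> i - \<theta> j)"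
proof (cases "i = j")
  case True
  then show ?thesis by (simp add: swap_entries_def)
next
  case False
  then show ?thesis
    unfolding swap_entries_def
    by (simp only: sum_mult_fun_upd[of UNIV] finite UNIV_I fun_upd_same fun_upd_other)
      (simp add: algebra_simps)
qed

lemma lower_own_entry_as_costly_as_swap:
  fixes w \<theta> :: "'k::finite \<Rightarrow> real"
  assumes "0 \<le> w j" and "w j < w i" and "\<theta> j < \<theta> i"
  obtains t where "\<theta> j \<le> t" and "t < \<theta> i"
    and "(\<Sum>k\<in>UNIV. w k * (\<theta>(i := t)) k) = (\<Sum>k\<in>UNIV. w k * swap_entries \<theta> i j k)"
proof -
  define s where "s = w j / w i"
  define t where "t = s * \<theta> i + (1 - s) * \<theta> j"
  have "w i > 0" using assms by linarith
  then have s: "0 \<le> s" "s < 1" "w i * s = w j"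
    using assms by (simp_all add: s_def)
  have "t - \<theta> j = s * (\<theta> i - \<theta> j)"
    by (simp add: t_def algebra_simps)
  moreover have "0 \<le> s * (\<theta> i - \<theta> j)"
    using s assms by simp
  ultimately have above: "\<theta> j \<le> t"
    by linarith
  have "\<theta> i - t = (1 - s) * (\<theta> i - \<theta> j)"
    by (simp add: t_def algebra_simps)
  moreover have "0 < (1 - s) * (\<theta> i - \<theta> j)"
    using s assms by simp
  ultimately have below: "t < \<theta> i"
    by linarith
  have "w i * (t - \<theta> i) = (w i * s - w i) * (\<theta> i - \<theta> j)"
    by (simp add: t_def algebra_simps)
  then have "w i * (t - \<theta> i) = - (w i - w j) * (\<theta> i - \<theta> j)"
    by (simp add: s(3))
  then have "(\<Sum>k\<in>UNIV. w k * (\<theta>(i := t)) k) = (\<Sum>k\<in>UNIV. w k * swap_entries \<theta> i j k)"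
    unfolding sum_mult_fun_upd[OF finite UNIV_I] sum_mult_swap_entries by (simp add: algebra_simps)
  with above below show thesis
    by (rule that)
qed

theorem theorem7:
  fixes W :: "'k::finite \<Rightarrow> 'k \<Rightarrow> real" and \<mu> :: "'k \<Rightarrow> real" and \<theta> :: "'k \<Rightarrow> real"
  assumes W01: "\<And>i j. 0 \<le> W i j \<and> W i j \<le> 1"
    and diag: "\<And>i j. i \<noteq> j \<Longrightarrow> W i j < W i i"
    and stable: "stable_equilibrium (\<lambda>i \<theta>. \<Sum>j\<in>UNIV. W i j * \<theta> j) \<mu> \<theta>"
  shows "envy_free (\<lambda>i \<theta>. \<Sum>j\<in>UNIV. W i j * \<theta> j) \<mu> \<theta>"
proof -
  have feasible: "feasible (\<lambda>i \<theta>. \<Sum>j\<in>UNIV. W i j * \<theta> j) \<mu> \<theta>"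
    using stable by (simp add: stable_equilibrium_def)
  have no_envy: False
    if less: "\<theta> j < \<theta> i" and swap_ok: "\<mu> i \<le> (\<Sum>k\<in>UNIV. W i k * swap_entries \<theta> i j k)"
    for i j
  proof -
    from less have "i \<noteq> j" by auto
    then have "W i j < W i i" by (rule diag)
    then obtain t where "\<theta> j \<le> t" "t < \<theta> i"
      and "(\<Sum>k\<in>UNIV. W i k * (\<theta>(i := t)) k) = (\<Sum>k\<in>UNIV. W i k * swap_entries \<theta> i j k)"
      using lower_own_entry_as_costly_as_swap[of "W i" j i \<theta>] W01 less by blast
    moreover have "0 \<le> \<theta> j"
      using feasible by (simp add: feasible_def strategy_def)
    ultimately show False
      using stable swap_ok unfolding stable_equilibrium_def by force
  qed
  show ?thesis
    using feasible no_envy by (auto simp: envy_free_def)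
qed

end
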